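(* If $\mathcal{Q}\subseteq 2^E$ ($E$ finite) is weakly Rayleigh, then all maximal elements of $\mathcal{Q}$ (under inclusion) have the same cardinality $r$, and all minimal elements of $\mathcal{Q}$ have the same cardinality $s$.
   Context: For $\omega:2^E\to[0,\infty)$ not identically zero, $Z(\omega;\mathbf{y})=\sum_S\omega(S)\prod_{e\in S}y_e$; with subscripts denoting partial derivatives, $Z$ is Rayleigh if $Z_eZ_f-Z_{ef}Z\ge0$ for all distinct $e,f$ and all positive $\mathbf{y}$. $\mathcal{Q}$ is weakly Rayleigh if some $\omega\ge0$ with $\{S:\omega(S)>0\}=\mathcal{Q}$ has $Z(\omega;\mathbf{y})$ Rayleigh. *)

theory Defs
  imports Main "HOL-Analysis.Analysis"
begin

definition genpoly :: "'a set \<Rightarrow> ('a set \<Rightarrow> real) \<Rightarrow> ('a \<Rightarrow> real) \<Rightarrow> real" where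
  "genpoly E \<omega> y = (\<Sum>S\<in>Pow E. \<omega> S * (\<Prod>e\<in>S. y e))"

text \<open>Partial derivative with respect to y_e of the multiaffine polynomial genpoly E \<omega>.\<close>
definition genpoly_d1 :: "'a set \<Rightarrow> ('a set \<Rightarrow> real) \<Rightarrow> 'a \<Rightarrow> ('a \<Rightarrow> real) \<Rightarrow> real" where
  "genpoly_d1 E \<omega> e y = (\<Sum>S\<in>{S\<in>Pow E. e \<in> S}. \<omega> S * (\<Prod>g\<in>S - {e}. y g))"

text \<open>Mixed second partial derivative with respect to y_e and y_f (e \<noteq> f).\<close>
definition genpoly_d2 :: "'a set \<Rightarrow> ('a set \<Rightarrow> real) \<Rightarrow> 'a \<Rightarrow> 'a \<Rightarrow> ('a \<Rightarrow> real) \<Rightarrow> real" where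
  "genpoly_d2 E \<omega> e f y = (\<Sum>S\<in>{S\<in>Pow E. e \<in> S \<and> f \<in> S}. \<omega> S * (\<Prod>g\<in>S - {e, f}. y g))"

definition rayleigh :: "'a set \<Rightarrow> ('a set \<Rightarrow> real) \<Rightarrow> bool" where
  "rayleigh E \<omega> \<longleftrightarrow>
     (\<forall>e\<in>E. \<forall>f\<in>E. e \<noteq> f \<longrightarrow>
       (\<forall>y. (\<forall>g\<in>E. y g > 0) \<longrightarrow>
          genpoly_d1 E \<omega> e y * genpoly_d1 E \<omega> f y - genpoly_d2 E \<omega> e f y * genpoly E \<omega> y \<ge> 0))"

definition weakly_rayleigh :: "'a set \<Rightarrow> 'a set set \<Rightarrow> bool" where
  "weakly_rayleigh E Q \<longleftrightarrow>
     (\<exists>\<omega> :: 'a set \<Rightarrow> real.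
        (\<forall>S. \<omega> S \<ge> 0) \<and> (\<exists>S. \<omega> S \<noteq> 0) \<and>
        {S. \<omega> S > 0} = Q \<and> rayleigh E \<omega>)"

end

theory Submission
  imports Defs
begin

text \<open>Write \<open>Z\<^sup>J\<^sub>I\<close> for the generating polynomial of the minor of \<open>\<omega>\<close> in which \<open>I\<close> is
  contracted and \<open>J\<close> deleted. For \<open>e \<noteq> f\<close> one has
  \<open>Z\<^sub>e Z\<^sub>f - Z\<^sub>e\<^sub>f Z = Z\<^sup>f\<^sub>e Z\<^sup>e\<^sub>f - Z\<^sup>e\<^sup>f Z\<^sub>e\<^sub>f\<close>, so the Rayleigh inequality
  says \<open>Z\<^sup>e\<^sup>f Z\<^sub>e\<^sub>f \<le> Z\<^sup>f\<^sub>e Z\<^sup>e\<^sub>f\<close>. Substituting \<open>y = t\<^sup>w\<close> for an integer weight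
  \<open>w\<close> and letting \<open>t \<rightarrow> \<infinity>\<close> compares the largest exponents on both sides: if \<open>X \<in> Q\<close>
  avoids \<open>e, f\<close> and \<open>Y \<in> Q\<close> contains both, there are \<open>S\<^sub>1, S\<^sub>2 \<in> Q\<close> separating \<open>e\<close>
  and \<open>f\<close> with \<open>w(X) + w(Y) \<le> w(S\<^sub>1) + w(S\<^sub>2)\<close>.

  Let \<open>A\<close> be maximal and suppose \<open>B \<in> Q\<close> is larger, with \<open>|B - A|\<close> least possible.
  Then \<open>|B - A| \<ge> 2\<close>; take \<open>e, f \<in> B - A\<close> and let \<open>w\<close> be \<open>1\<close> on \<open>A \<union> B\<close> and very
  negative elsewhere. The resulting \<open>S\<^sub>1, S\<^sub>2\<close> lie in \<open>A \<union> B\<close>, each misses a point of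
  \<open>B - A\<close>, and \<open>|S\<^sub>1| + |S\<^sub>2| \<ge> |A| + |B| > 2|A|\<close>, contradicting the choice of \<open>B\<close>.
  The exchange property passes to the complements \<open>E - S\<close>, which turns minimal elements
  into maximal ones.\<close>

definition minor_sets :: "'a set \<Rightarrow> 'a set \<Rightarrow> 'a set \<Rightarrow> 'a set set" where
  "minor_sets E I J = {S \<in> Pow E. I \<subseteq> S \<and> S \<inter> J = {}}"

definition genpoly_minor ::
    "'a set \<Rightarrow> ('a set \<Rightarrow> real) \<Rightarrow> 'a set \<Rightarrow> 'a set \<Rightarrow> ('a \<Rightarrow> real) \<Rightarrow> real" where
  "genpoly_minor E \<omega> I J y = (\<Sum>S\<in>minor_sets E I J. \<omega> S * (\<Prod>g\<in>S - I. y g))"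

lemma genpoly_eq_minor: "genpoly E \<omega> y = genpoly_minor E \<omega> {} {} y"
  unfolding genpoly_def genpoly_minor_def minor_sets_def Pow_def by simp

lemma genpoly_d1_eq_minor: "genpoly_d1 E \<omega> e y = genpoly_minor E \<omega> {e} {} y"
  unfolding genpoly_d1_def genpoly_minor_def minor_sets_def by simp

lemma genpoly_d2_eq_minor: "genpoly_d2 E \<omega> e f y = genpoly_minor E \<omega> {e, f} {} y"
  unfolding genpoly_d2_def genpoly_minor_def minor_sets_def by simp

lemma genpoly_minor_split:
  assumes "finite E" and "x \<notin> I"
  shows "genpoly_minor E \<omega> I J y
    = genpoly_minor E \<omega> I (insert x J) y + y x * genpoly_minor E \<omega> (insert x I) J y"
proof -
  have parts: "minor_sets E I J \<inter> {S. x \<in> S} = minor_sets E (insert x I) J"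
    "minor_sets E I J - {S. x \<in> S} = minor_sets E I (insert x J)"
    unfolding minor_sets_def by auto
  have "\<omega> S * (\<Prod>g\<in>S - I. y g) = y x * (\<omega> S * (\<Prod>g\<in>S - insert x I. y g))"
    if "S \<in> minor_sets E (insert x I) J" for S
  proof -
    have "finite (S - I)" "x \<in> S - I"
      using that assms finite_subset unfolding minor_sets_def by auto
    then have "(\<Prod>g\<in>S - I. y g) = y x * (\<Prod>g\<in>S - I - {x}. y g)"
      by (rule prod.remove)
    moreover have "S - I - {x} = S - insert x I"
      by blast
    ultimately show ?thesis
      by simp
  qed
  then have contracted: "(\<Sum>S\<in>minor_sets E (insert x I) J. \<omega> S * (\<Prod>g\<in>S - I. y g))
      = y x * genpoly_minor E \<omega> (insert x I) J y"
    unfolding genpoly_minor_def sum_distrib_left by (rule sum.cong[OF refl])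
  have "finite (minor_sets E I J)"
    using assms(1) unfolding minor_sets_def by simp
  from sum.Int_Diff[OF this, of "\<lambda>S. \<omega> S * (\<Prod>g\<in>S - I. y g)" "{S. x \<in> S}"]
  show ?thesis
    unfolding parts contracted by (simp add: genpoly_minor_def)
qed

lemma rayleigh_difference_eq_minors:
  assumes "finite E" and "e \<noteq> f"
  shows "genpoly_d1 E \<omega> e y * genpoly_d1 E \<omega> f y - genpoly_d2 E \<omega> e f y * genpoly E \<omega> y
    = genpoly_minor E \<omega> {e} {f} y * genpoly_minor E \<omega> {f} {e} y
      - genpoly_minor E \<omega> {} {e, f} y * genpoly_minor E \<omega> {e, f} {} y"
proof -
  note split = genpoly_minor_split[OF assms(1)]
  have "genpoly_minor E \<omega> {} {} y = genpoly_minor E \<omega> {} {e} y + y e * genpoly_minor E \<omega> {e} {} y"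
    and "genpoly_minor E \<omega> {} {e} y
      = genpoly_minor E \<omega> {} {e, f} y + y f * genpoly_minor E \<omega> {f} {e} y"
    and "genpoly_minor E \<omega> {e} {} y
      = genpoly_minor E \<omega> {e} {f} y + y f * genpoly_minor E \<omega> {e, f} {} y"
    and "genpoly_minor E \<omega> {f} {} y
      = genpoly_minor E \<omega> {f} {e} y + y e * genpoly_minor E \<omega> {e, f} {} y"
    using split[where x = e and I = "{}" and J = "{}"] split[where x = f and I = "{}" and J = "{e}"]
      split[where x = f and I = "{e}" and J = "{}"] split[where x = e and I = "{f}" and J = "{}"]
      assms(2) by (simp_all add: insert_commute[of f e])
  then show ?thesis
    unfolding genpoly_eq_minor genpoly_d1_eq_minor genpoly_d2_eq_minor by (simp add: algebra_simps)
qed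

lemma genpoly_minor_ge_term:
  assumes "finite E" and "\<forall>S. \<omega> S \<ge> 0" and "\<forall>g\<in>E. y g \<ge> 0"
    and "S \<in> minor_sets E I J"
  shows "\<omega> S * (\<Prod>g\<in>S - I. y g) \<le> genpoly_minor E \<omega> I J y"
  unfolding genpoly_minor_def
proof (rule member_le_sum)
  show "finite (minor_sets E I J)"
    using assms(1) unfolding minor_sets_def by simp
  show "0 \<le> \<omega> T * (\<Prod>g\<in>T - I. y g)" if "T \<in> minor_sets E I J - {S}" for T
    using that assms(2,3) unfolding minor_sets_def by (intro mult_nonneg_nonneg prod_nonneg) auto
qed fact

lemma prod_powr_minor_term:
  fixes w :: "'a \<Rightarrow> int" and t :: real
  assumes "finite E" and "S \<in> minor_sets E I J" and "t > 0"
  shows "(\<Prod>g\<in>S - I. t powr of_int (w g)) = t powr of_int (sum w S - sum w I)"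
proof -
  have "finite S" "I \<subseteq> S"
    using assms(1,2) finite_subset unfolding minor_sets_def by auto
  then show ?thesis
    using assms(3) by (simp add: powr_sum[symmetric] sum_diff)
qed

lemma genpoly_minor_product_powr_le:
  fixes w :: "'a \<Rightarrow> int"
  assumes "finite E" and "\<forall>S. \<omega> S \<ge> 0" and "t \<ge> 1"
    and bound: "\<And>S1 S2. S1 \<in> minor_sets E I J \<Longrightarrow> S2 \<in> minor_sets E I' J' \<Longrightarrow>
      \<omega> S1 > 0 \<Longrightarrow> \<omega> S2 > 0 \<Longrightarrow> sum w S1 + sum w S2 \<le> k"
  shows "genpoly_minor E \<omega> I J (\<lambda>g. t powr of_int (w g))
      * genpoly_minor E \<omega> I' J' (\<lambda>g. t powr of_int (w g))
    \<le> (\<Sum>S\<in>minor_sets E I J. \<omega> S) * (\<Sum>S\<in>minor_sets E I' J'. \<omega> S)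
      * t powr of_int (k - sum w I - sum w I')"
proof -
  define P where "P = t powr of_int (k - sum w I - sum w I')"
  have "\<omega> S1 * (\<Prod>g\<in>S1 - I. t powr of_int (w g)) * (\<omega> S2 * (\<Prod>g\<in>S2 - I'. t powr of_int (w g)))
      \<le> \<omega> S1 * \<omega> S2 * P"
    if S1: "S1 \<in> minor_sets E I J" and S2: "S2 \<in> minor_sets E I' J'" for S1 S2
  proof (cases "\<omega> S1 > 0 \<and> \<omega> S2 > 0")
    case True
    have "(\<Prod>g\<in>S1 - I. t powr of_int (w g)) * (\<Prod>g\<in>S2 - I'. t powr of_int (w g))
        = t powr of_int (sum w S1 - sum w I + (sum w S2 - sum w I'))"
      using assms(1,3) S1 S2 by (simp add: prod_powr_minor_term powr_add)
    also have "\<dots> \<le> P"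
    proof -
      have "sum w S1 - sum w I + (sum w S2 - sum w I') \<le> k - sum w I - sum w I'"
        using bound[OF S1 S2] True by linarith
      then show ?thesis
        unfolding P_def by (rule powr_mono[OF iffD2[OF of_int_le_iff] assms(3)])
    qed
    finally show ?thesis
      using assms(2) by (simp add: mult_left_mono mult.assoc mult.left_commute)
  next
    case False
    then have "\<omega> S1 = 0 \<or> \<omega> S2 = 0"
      using assms(2) by (metis order_le_less)
    then show ?thesis
      using assms(2,3) by (auto simp: P_def)
  qed
  then have "genpoly_minor E \<omega> I J (\<lambda>g. t powr of_int (w g))
      * genpoly_minor E \<omega> I' J' (\<lambda>g. t powr of_int (w g))
    \<le> (\<Sum>S1\<in>minor_sets E I J. \<Sum>S2\<in>minor_sets E I' J'. \<omega> S1 * \<omega> S2 * P)"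
    unfolding genpoly_minor_def sum_product by (intro sum_mono)
  also have "\<dots> = (\<Sum>S\<in>minor_sets E I J. \<omega> S) * (\<Sum>S\<in>minor_sets E I' J'. \<omega> S) * P"
    unfolding sum_product by (simp only: sum_distrib_right)
  finally show ?thesis
    unfolding P_def .
qed

lemma genpoly_minor_product_powr_ge:
  fixes w :: "'a \<Rightarrow> int"
  assumes "finite E" and "\<forall>S. \<omega> S \<ge> 0" and "t > 0"
    and S1: "S1 \<in> minor_sets E I J" and S2: "S2 \<in> minor_sets E I' J'"
  shows "\<omega> S1 * \<omega> S2 * t powr of_int (sum w S1 - sum w I + (sum w S2 - sum w I'))
    \<le> genpoly_minor E \<omega> I J (\<lambda>g. t powr of_int (w g))
      * genpoly_minor E \<omega> I' J' (\<lambda>g. t powr of_int (w g))"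
proof -
  have "\<forall>g\<in>E. t powr of_int (w g) \<ge> 0"
    by simp
  note term_le = genpoly_minor_ge_term[OF assms(1,2) this]
  have term_nonneg: "0 \<le> \<omega> S * (\<Prod>g\<in>S - I. t powr of_int (w g))" for S I
    using assms(2) by (simp add: prod_nonneg)
  have "\<omega> S1 * \<omega> S2 * t powr of_int (sum w S1 - sum w I + (sum w S2 - sum w I'))
      = (\<omega> S1 * (\<Prod>g\<in>S1 - I. t powr of_int (w g))) * (\<omega> S2 * (\<Prod>g\<in>S2 - I'. t powr of_int (w g)))"
    using assms(1,3) S1 S2 by (simp add: prod_powr_minor_term powr_add)
  also have "\<dots> \<le> genpoly_minor E \<omega> I J (\<lambda>g. t powr of_int (w g))
      * genpoly_minor E \<omega> I' J' (\<lambda>g. t powr of_int (w g))"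
    by (rule mult_mono[OF term_le[OF S1] term_le[OF S2] order_trans[OF term_nonneg term_le[OF S1]]
          term_nonneg])
  finally show ?thesis .
qed

lemma rayleigh_minor_ineq:
  assumes "rayleigh E \<omega>" and "finite E" and "e \<in> E" and "f \<in> E" and "e \<noteq> f"
    and "\<forall>g\<in>E. y g > 0"
  shows "genpoly_minor E \<omega> {} {e, f} y * genpoly_minor E \<omega> {e, f} {} y
    \<le> genpoly_minor E \<omega> {e} {f} y * genpoly_minor E \<omega> {f} {e} y"
  using assms rayleigh_difference_eq_minors[OF assms(2,5), of \<omega> y] unfolding rayleigh_def by force

lemma rayleigh_powr_weight_bound:
  fixes w :: "'a \<Rightarrow> int"
  assumes "rayleigh E \<omega>" and "finite E" and nonneg: "\<forall>S. \<omega> S \<ge> 0" and "e \<noteq> f" and "t \<ge> 1"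
    and X: "X \<in> minor_sets E {} {e, f}" and Y: "Y \<in> minor_sets E {e, f} {}"
    and bound: "\<And>S1 S2. S1 \<in> minor_sets E {e} {f} \<Longrightarrow> S2 \<in> minor_sets E {f} {e} \<Longrightarrow>
      \<omega> S1 > 0 \<Longrightarrow> \<omega> S2 > 0 \<Longrightarrow> sum w S1 + sum w S2 \<le> k"
  shows "\<omega> X * \<omega> Y * t powr of_int (sum w X + sum w Y - k)
    \<le> (\<Sum>S\<in>minor_sets E {e} {f}. \<omega> S) * (\<Sum>S\<in>minor_sets E {f} {e}. \<omega> S)"
proof -
  define y where "y g = t powr of_int (w g)" for g
  define b where "b = t powr of_int (k - w e - w f)"
  have "e \<in> E" "f \<in> E"
    using Y unfolding minor_sets_def by auto
  have "\<omega> X * \<omega> Y * t powr of_int (sum w X + sum w Y - k) * b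
      = \<omega> X * \<omega> Y * t powr of_int (sum w X - sum w {} + (sum w Y - sum w {e, f}))"
    using \<open>e \<noteq> f\<close> unfolding b_def by (simp add: mult.assoc powr_add[symmetric] algebra_simps)
  also have "\<dots> \<le> genpoly_minor E \<omega> {} {e, f} y * genpoly_minor E \<omega> {e, f} {} y"
    unfolding y_def using genpoly_minor_product_powr_ge[OF assms(2) nonneg _ X Y] \<open>t \<ge> 1\<close> by simp
  also have "\<dots> \<le> genpoly_minor E \<omega> {e} {f} y * genpoly_minor E \<omega> {f} {e} y"
    using rayleigh_minor_ineq[OF assms(1,2) \<open>e \<in> E\<close> \<open>f \<in> E\<close> \<open>e \<noteq> f\<close>] \<open>t \<ge> 1\<close>
    unfolding y_def by simp
  also have "\<dots> \<le> (\<Sum>S\<in>minor_sets E {e} {f}. \<omega> S) * (\<Sum>S\<in>minor_sets E {f} {e}. \<omega> S) * b"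
    using genpoly_minor_product_powr_le[where I = "{e}" and J = "{f}" and I' = "{f}" and J' = "{e}",
        OF assms(2) nonneg \<open>t \<ge> 1\<close> bound]
    unfolding y_def b_def by simp
  finally show ?thesis
    using \<open>t \<ge> 1\<close> unfolding b_def by simp
qed

text \<open>The max-plus limit of \<open>rayleigh_minor_ineq\<close> under \<open>y = t\<^sup>w\<close>, \<open>t \<rightarrow> \<infinity>\<close>.\<close>
definition tropical_rayleigh :: "'a set set \<Rightarrow> bool" where
  "tropical_rayleigh Q \<longleftrightarrow>
     (\<forall>(w :: 'a \<Rightarrow> int) e f X Y. X \<in> Q \<longrightarrow> Y \<in> Q \<longrightarrow> e \<noteq> f \<longrightarrow>
        e \<notin> X \<longrightarrow> f \<notin> X \<longrightarrow> e \<in> Y \<longrightarrow> f \<in> Y \<longrightarrow>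
        (\<exists>S1\<in>Q. \<exists>S2\<in>Q. e \<in> S1 \<and> f \<notin> S1 \<and> f \<in> S2 \<and> e \<notin> S2 \<and>
           sum w X + sum w Y \<le> sum w S1 + sum w S2))"

lemma tropical_rayleighI:
  assumes "\<And>(w :: 'a \<Rightarrow> int) e f X Y. X \<in> Q \<Longrightarrow> Y \<in> Q \<Longrightarrow> e \<noteq> f \<Longrightarrow>
      e \<notin> X \<Longrightarrow> f \<notin> X \<Longrightarrow> e \<in> Y \<Longrightarrow> f \<in> Y \<Longrightarrow>
      \<exists>S1\<in>Q. \<exists>S2\<in>Q. e \<in> S1 \<and> f \<notin> S1 \<and> f \<in> S2 \<and> e \<notin> S2 \<and>
        sum w X + sum w Y \<le> sum w S1 + sum w S2"
  shows "tropical_rayleigh Q"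
  unfolding tropical_rayleigh_def using assms by (intro allI impI) assumption

lemma tropical_rayleighE:
  fixes w :: "'a \<Rightarrow> int"
  assumes "tropical_rayleigh Q" and "X \<in> Q" and "Y \<in> Q" and "e \<noteq> f"
    and "e \<notin> X" and "f \<notin> X" and "e \<in> Y" and "f \<in> Y"
  obtains S1 S2 where "S1 \<in> Q" and "S2 \<in> Q" and "e \<in> S1" and "f \<notin> S1" and "f \<in> S2"
    and "e \<notin> S2" and "sum w X + sum w Y \<le> sum w S1 + sum w S2"
  using assms(1)[unfolded tropical_rayleigh_def, rule_format, OF assms(2-)] that by blast

lemma rayleigh_imp_tropical_rayleigh:
  assumes fin: "finite E" and nonneg: "\<forall>S. \<omega> S \<ge> 0" and ray: "rayleigh E \<omega>"
  shows "tropical_rayleigh {S \<in> Pow E. \<omega> S > 0}"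
proof (rule tropical_rayleighI)
  fix w :: "'a \<Rightarrow> int" and e f X Y
  let ?Q = "{S \<in> Pow E. \<omega> S > 0}"
  assume X: "X \<in> ?Q" and Y: "Y \<in> ?Q" and "e \<noteq> f"
    and "e \<notin> X" "f \<notin> X" "e \<in> Y" "f \<in> Y"
  show "\<exists>S1\<in>?Q. \<exists>S2\<in>?Q. e \<in> S1 \<and> f \<notin> S1 \<and> f \<in> S2 \<and> e \<notin> S2 \<and>
      sum w X + sum w Y \<le> sum w S1 + sum w S2"
  proof (rule ccontr)
    assume "\<not> ?thesis"
    then have gap: "sum w S1 + sum w S2 \<le> sum w X + sum w Y - 1"
      if "S1 \<in> minor_sets E {e} {f}" "S2 \<in> minor_sets E {f} {e}" "\<omega> S1 > 0" "\<omega> S2 > 0"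
      for S1 S2
      using that unfolding minor_sets_def by fastforce
    define m where "m = \<omega> X * \<omega> Y"
    define K where "K = (\<Sum>S\<in>minor_sets E {e} {f}. \<omega> S) * (\<Sum>S\<in>minor_sets E {f} {e}. \<omega> S)"
    have "m > 0"
      using X Y unfolding m_def by simp
    moreover have "K \<ge> 0"
      unfolding K_def using nonneg by (simp add: sum_nonneg)
    moreover have "m * t \<le> K" if "t \<ge> 1" for t :: real
    proof -
      have "X \<in> minor_sets E {} {e, f}" "Y \<in> minor_sets E {e, f} {}"
        using X Y \<open>e \<notin> X\<close> \<open>f \<notin> X\<close> \<open>e \<in> Y\<close> \<open>f \<in> Y\<close> unfolding minor_sets_def by auto
      from rayleigh_powr_weight_bound[OF ray fin nonneg \<open>e \<noteq> f\<close> that this gap]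
      show ?thesis
        using that unfolding m_def K_def by simp
    qed
    ultimately have "m * (K / m + 1) \<le> K"
      by (simp add: add_increasing)
    then show False
      using \<open>m > 0\<close> by (simp add: distrib_left)
  qed
qed

lemma tropical_rayleigh_complements:
  assumes "finite E" and "Q \<subseteq> Pow E" and "tropical_rayleigh Q"
  shows "tropical_rayleigh ((-) E ` Q)"
proof (rule tropical_rayleighI)
  fix w :: "'a \<Rightarrow> int" and e f X' Y'
  assume "X' \<in> (-) E ` Q" "Y' \<in> (-) E ` Q" and "e \<noteq> f"
    and "e \<notin> X'" "f \<notin> X'" "e \<in> Y'" "f \<in> Y'"
  then obtain X Y where "X \<in> Q" "X' = E - X" "Y \<in> Q" "Y' = E - Y"
    by blast
  with \<open>e \<notin> X'\<close> \<open>f \<notin> X'\<close> \<open>e \<in> Y'\<close> \<open>f \<in> Y'\<close>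
  have "e \<notin> Y" "f \<notin> Y" "e \<in> X" "f \<in> X" "e \<in> E" "f \<in> E"
    by auto
  obtain S1 S2 where S: "S1 \<in> Q" "S2 \<in> Q" "e \<in> S1" "f \<notin> S1" "f \<in> S2" "e \<notin> S2"
    and "sum (\<lambda>g. - w g) Y + sum (\<lambda>g. - w g) X \<le> sum (\<lambda>g. - w g) S1 + sum (\<lambda>g. - w g) S2"
    by (rule tropical_rayleighE[OF assms(3) \<open>Y \<in> Q\<close> \<open>X \<in> Q\<close> \<open>e \<noteq> f\<close>
          \<open>e \<notin> Y\<close> \<open>f \<notin> Y\<close> \<open>e \<in> X\<close> \<open>f \<in> X\<close>])
  moreover have "sum w (E - S) = sum w E - sum w S" if "S \<in> Q" for S
    using that assms(1,2) by (auto intro: sum_diff)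
  ultimately have "sum w X' + sum w Y' \<le> sum w (E - S2) + sum w (E - S1)"
    using \<open>X \<in> Q\<close> \<open>Y \<in> Q\<close> \<open>X' = E - X\<close> \<open>Y' = E - Y\<close> by (simp add: sum_negf)
  moreover have "E - S2 \<in> (-) E ` Q" "E - S1 \<in> (-) E ` Q"
    using imageI[OF S(2), of "(-) E"] imageI[OF S(1), of "(-) E"] by simp_all
  ultimately show "\<exists>S1\<in>(-) E ` Q. \<exists>S2\<in>(-) E ` Q. e \<in> S1 \<and> f \<notin> S1 \<and> f \<in> S2 \<and> e \<notin> S2 \<and>
      sum w X' + sum w Y' \<le> sum w S1 + sum w S2"
    using S(3-6) \<open>e \<in> E\<close> \<open>f \<in> E\<close> by (intro bexI[where x = "E - S2"] bexI[where x = "E - S1"]) auto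
qed

lemma sum_penalised_indicator_eq_card:
  fixes N :: int
  assumes "S \<subseteq> U"
  shows "(\<Sum>g\<in>S. if g \<in> U then 1 else - N) = int (card S)"
proof -
  have "(\<Sum>g\<in>S. if g \<in> U then 1 else - N) = (\<Sum>g\<in>S. 1)"
    using assms by (intro sum.cong) auto
  then show ?thesis
    by simp
qed

lemma sum_penalised_indicator_le:
  fixes N :: int
  assumes "finite S" and "finite U" and "N \<ge> 0"
  shows "(\<Sum>g\<in>S. if g \<in> U then 1 else - N) \<le> int (card U) - (if S \<subseteq> U then 0 else N)"
proof -
  have "(\<Sum>g\<in>S. if g \<in> U then 1 else - N) = int (card (S \<inter> U)) - N * int (card (S - U))"
    using sum.Int_Diff[OF assms(1), of "\<lambda>g. if g \<in> U then 1 else - N" U] by simp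
  moreover have "card (S \<inter> U) \<le> card U"
    using assms(2) by (simp add: card_mono)
  moreover have "N * int (card (S - U)) \<ge> (if S \<subseteq> U then 0 else N)"
  proof (cases "S \<subseteq> U")
    case False
    then have "card (S - U) > 0"
      using assms(1) by (auto simp: card_gt_0_iff)
    then have "N * 1 \<le> N * int (card (S - U))"
      using assms(3) by (intro mult_left_mono) simp_all
    then show ?thesis
      using False by simp
  qed (simp add: assms(3))
  ultimately show ?thesis
    by linarith
qed

lemma tropical_rayleigh_exchange_within_union:
  assumes trop: "tropical_rayleigh Q" and fin: "\<forall>S\<in>Q. finite S" and "A \<in> Q" and "B \<in> Q"
    and "e \<in> B" and "e \<notin> A" and "f \<in> B" and "f \<notin> A" and "e \<noteq> f"
  obtains S1 S2 where "S1 \<in> Q" and "S2 \<in> Q" and "e \<in> S1" and "f \<notin> S1" and "f \<in> S2"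
    and "e \<notin> S2" and "S1 \<subseteq> A \<union> B" and "S2 \<subseteq> A \<union> B"
    and "card A + card B \<le> card S1 + card S2"
proof -
  define U where "U = A \<union> B"
  define N :: int where "N = 2 * int (card U) + 1"
  define w :: "'a \<Rightarrow> int" where "w g = (if g \<in> U then 1 else - N)" for g
  obtain S1 S2 where S: "S1 \<in> Q" "S2 \<in> Q" "e \<in> S1" "f \<notin> S1" "f \<in> S2" "e \<notin> S2"
    and exchange: "sum w A + sum w B \<le> sum w S1 + sum w S2"
    by (rule tropical_rayleighE[OF trop \<open>A \<in> Q\<close> \<open>B \<in> Q\<close> \<open>e \<noteq> f\<close> \<open>e \<notin> A\<close> \<open>f \<notin> A\<close>
          \<open>e \<in> B\<close> \<open>f \<in> B\<close>])
  have "finite U"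
    using fin \<open>A \<in> Q\<close> \<open>B \<in> Q\<close> unfolding U_def by simp
  have inside: "sum w S = int (card S)" if "S \<subseteq> U" for S
    unfolding w_def using that by (rule sum_penalised_indicator_eq_card)
  have penalised: "sum w S \<le> int (card U) - (if S \<subseteq> U then 0 else N)" if "S \<in> Q" for S
    unfolding w_def using fin that \<open>finite U\<close> by (intro sum_penalised_indicator_le) (simp_all add: N_def)
  have "sum w A + sum w B \<ge> 0"
    using inside[of A] inside[of B] unfolding U_def by simp
  then have "S1 \<subseteq> U \<and> S2 \<subseteq> U"
    using exchange penalised[OF S(1)] penalised[OF S(2)] unfolding N_def by (auto split: if_splits)
  moreover have "card A + card B \<le> card S1 + card S2"
    using exchange calculation inside[of A] inside[of B] inside[of S1] inside[of S2]
    unfolding U_def by simp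
  ultimately show thesis
    using that S unfolding U_def by blast
qed

lemma tropical_rayleigh_card_le_maximal:
  assumes trop: "tropical_rayleigh Q" and fin: "\<forall>S\<in>Q. finite S"
    and A: "A \<in> Q" and A_max: "\<forall>B\<in>Q. A \<subseteq> B \<longrightarrow> B = A" and "B \<in> Q"
  shows "card B \<le> card A"
  using \<open>B \<in> Q\<close>
proof (induction "card (B - A)" arbitrary: B rule: less_induct)
  case (less B)
  show ?case
  proof (rule ccontr)
    assume larger: "\<not> card B \<le> card A"
    have "finite A" "finite B"
      using fin A less.prems by auto
    have "A - B \<noteq> {}"
      using A_max less.prems larger by auto
    then have "card (A - B) > 0"
      using \<open>finite A\<close> by (simp add: card_gt_0_iff)
    moreover have "card A = card (A \<inter> B) + card (A - B)" "card B = card (A \<inter> B) + card (B - A)"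
      using card_Int_Diff[OF \<open>finite A\<close>, of B] card_Int_Diff[OF \<open>finite B\<close>, of A]
      by (simp_all add: Int_commute)
    ultimately have "\<not> card (B - A) \<le> Suc 0"
      using larger by linarith
    then obtain e f where "e \<in> B" "e \<notin> A" "f \<in> B" "f \<notin> A" "e \<noteq> f"
      using card_le_Suc0_iff_eq[of "B - A"] \<open>finite B\<close> by auto
    then obtain S1 S2 where S: "S1 \<in> Q" "S2 \<in> Q" "e \<in> S1" "f \<notin> S1" "f \<in> S2" "e \<notin> S2"
      "S1 \<subseteq> A \<union> B" "S2 \<subseteq> A \<union> B" and sum_card: "card A + card B \<le> card S1 + card S2"
      using tropical_rayleigh_exchange_within_union[OF trop fin A less.prems] by metis
    have "S1 - A \<subset> B - A" "S2 - A \<subset> B - A"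
      using S \<open>e \<in> B\<close> \<open>f \<in> B\<close> \<open>e \<notin> A\<close> \<open>f \<notin> A\<close> by blast+
    then have "card (S1 - A) < card (B - A)" "card (S2 - A) < card (B - A)"
      using \<open>finite B\<close> by (simp_all add: psubset_card_mono)
    then have "card S1 \<le> card A" "card S2 \<le> card A"
      using less.hyps S by simp_all
    then show False
      using sum_card larger by linarith
  qed
qed

lemma tropical_rayleigh_card_ge_minimal:
  assumes "finite E" and "Q \<subseteq> Pow E" and "tropical_rayleigh Q"
    and A: "A \<in> Q" and A_min: "\<forall>B\<in>Q. B \<subseteq> A \<longrightarrow> B = A" and "B \<in> Q"
  shows "card A \<le> card B"
proof -
  have "card (E - B) \<le> card (E - A)"
  proof (rule tropical_rayleigh_card_le_maximal[OF tropical_rayleigh_complements[OF assms(1-3)]])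
    show "\<forall>S\<in>(-) E ` Q. finite S"
      using assms(1) by simp
    show "E - A \<in> (-) E ` Q" "E - B \<in> (-) E ` Q"
      using A \<open>B \<in> Q\<close> by auto
    show "\<forall>B'\<in>(-) E ` Q. E - A \<subseteq> B' \<longrightarrow> B' = E - A"
      using A_min A assms(2) by (auto simp: double_diff)
  qed
  moreover have "card (E - S) = card E - card S" "card S \<le> card E" if "S \<in> Q" for S
    using that assms(1,2) by (auto simp: card_Diff_subset card_mono finite_subset)
  ultimately show ?thesis
    using A \<open>B \<in> Q\<close> by fastforce
qed

theorem corollary4p8:
  fixes E :: "'a set" and Q :: "'a set set"
  assumes "finite E" and "Q \<subseteq> Pow E" and "weakly_rayleigh E Q"
  shows "(\<exists>r. \<forall>A\<in>Q. (\<forall>B\<in>Q. A \<subseteq> B \<longrightarrow> B = A) \<longrightarrow> card A = r)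
       \<and> (\<exists>s. \<forall>A\<in>Q. (\<forall>B\<in>Q. B \<subseteq> A \<longrightarrow> B = A) \<longrightarrow> card A = s)"
proof -
  obtain \<omega> where nonneg: "\<forall>S. \<omega> S \<ge> 0" and supp: "{S. \<omega> S > 0} = Q" and ray: "rayleigh E \<omega>"
    using assms(3) unfolding weakly_rayleigh_def by blast
  have "{S \<in> Pow E. \<omega> S > 0} = Q"
    using supp assms(2) by auto
  then have trop: "tropical_rayleigh Q"
    using rayleigh_imp_tropical_rayleigh[OF assms(1) nonneg ray] by simp
  have "finite Q"
    using assms(1,2) finite_subset by blast
  then have "finite (card ` Q)"
    by simp
  have fin: "\<forall>S\<in>Q. finite S"
    using assms(1,2) finite_subset by blast
  have "card A = Max (card ` Q)" if "A \<in> Q" "\<forall>B\<in>Q. A \<subseteq> B \<longrightarrow> B = A" for A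
    using tropical_rayleigh_card_le_maximal[OF trop fin that] that \<open>finite (card ` Q)\<close>
    by (intro Max_eqI[symmetric]) auto
  moreover have "card A = Min (card ` Q)" if "A \<in> Q" "\<forall>B\<in>Q. B \<subseteq> A \<longrightarrow> B = A" for A
    using tropical_rayleigh_card_ge_minimal[OF assms(1,2) trop that] that \<open>finite (card ` Q)\<close>
    by (intro Min_eqI[symmetric]) auto
  ultimately show ?thesis
    by blast
qed

end
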